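(* Let $\Gamma,\Delta$ be finitely generated groups with free continuous actions on compact metric spaces $Y$ and $X$ respectively, and let $f:Y\to X$ be a homeomorphism inducing a quasi-isometry of warped cones, i.e. there are an index set $I$, maps $i\mapsto t_i$ and $i\mapsto\tau_i$ from $I$ onto $(0,\infty)$, and $C\ge1,A\ge0$ such that each $f:(t_iY,d_\Gamma)\to(\tau_iX,d_\Delta)$ is a $(C,A)$-quasi-isometry. Then there is a continuous cocycle $\delta:\Gamma\times Y\to\Delta$ (i.e. $\delta(\gamma_2,\gamma_1y)\delta(\gamma_1,y)=\delta(\gamma_2\gamma_1,y)$), such that for each fixed $y\in Y$ the map $\gamma\mapsto\delta(\gamma,y)$ is a bijection $\Gamma\to\Delta$, and there are constants $C'\ge1$, $A'\ge0$ with $C'^{-1}|\gamma|-A'\le|\delta(\gamma,y)|\le C'|\gamma|+A'$ for all $\gamma\in\Gamma,y\in Y$. In particular, $\Gamma$ and $\Delta$ are bijectively quasi-isometric.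
   Context: $|\cdot|$ is word length with respect to fixed finite symmetric generating sets. For a compact metric space $(Y,d)$ with a $\Gamma$-action and $t>0$, $tY$ is $Y$ with metric $td$ and $d_\Gamma$ is the largest metric on $tY$ with $d_\Gamma\le td$ and $d_\Gamma(y,sy)\le1$ for generators $s$. A $(C,A)$-quasi-isometry $g:Z\to W$ satisfies $C^{-1}d(z,z')-A\le d(g(z),g(z'))\le Cd(z,z')+A$ and the $A$-neighbourhood of $g(Z)$ equals $W$. $\Gamma\times Y$ is given the product topology with $\Gamma$, $\Delta$ discrete. *)

theory Defs
  imports "HOL-Analysis.Analysis" "HOL-Algebra.Generated_Groups"
begin

definition fg_group :: "('g, 'b) monoid_scheme \<Rightarrow> 'g set \<Rightarrow> bool" where
  "fg_group G S \<longleftrightarrow> group G \<and> finite S \<and> S \<subseteq> carrier G \<and>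
     (\<forall>s\<in>S. inv\<^bsub>G\<^esub> s \<in> S) \<and> generate G S = carrier G"

definition word_length :: "('g, 'b) monoid_scheme \<Rightarrow> 'g set \<Rightarrow> 'g \<Rightarrow> nat" where
  "word_length G S g = (LEAST n. \<exists>ws. length ws = n \<and> set ws \<subseteq> S \<and>
       foldr (\<lambda>a b. a \<otimes>\<^bsub>G\<^esub> b) ws \<one>\<^bsub>G\<^esub> = g)"

definition free_cont_action ::
  "('g, 'b) monoid_scheme \<Rightarrow> 'y::topological_space set \<Rightarrow> ('g \<Rightarrow> 'y \<Rightarrow> 'y) \<Rightarrow> bool" where
  "free_cont_action G Y phi \<longleftrightarrow>
     (\<forall>g\<in>carrier G. \<forall>y\<in>Y. phi g y \<in> Y) \<and>
     (\<forall>y\<in>Y. phi \<one>\<^bsub>G\<^esub> y = y) \<and>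
     (\<forall>g\<in>carrier G. \<forall>h\<in>carrier G. \<forall>y\<in>Y. phi (g \<otimes>\<^bsub>G\<^esub> h) y = phi g (phi h y)) \<and>
     (\<forall>g\<in>carrier G. continuous_on Y (phi g)) \<and>
     (\<forall>g\<in>carrier G. \<forall>y\<in>Y. phi g y = y \<longrightarrow> g = \<one>\<^bsub>G\<^esub>)"

definition is_metric_on :: "'a set \<Rightarrow> ('a \<Rightarrow> 'a \<Rightarrow> real) \<Rightarrow> bool" where
  "is_metric_on Y d \<longleftrightarrow>
     (\<forall>x\<in>Y. \<forall>y\<in>Y. 0 \<le> d x y \<and> (d x y = 0 \<longleftrightarrow> x = y) \<and> d x y = d y x) \<and>
     (\<forall>x\<in>Y. \<forall>y\<in>Y. \<forall>z\<in>Y. d x z \<le> d x y + d y z)"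

text \<open>The warped metric d_Gamma on tY: the largest metric d on Y with d \<le> t * dist
  and d(y, s y) \<le> 1 for all generators s.\<close>
definition warped_dist ::
  "'g set \<Rightarrow> ('g \<Rightarrow> 'y \<Rightarrow> 'y) \<Rightarrow> 'y::metric_space set \<Rightarrow> real \<Rightarrow> 'y \<Rightarrow> 'y \<Rightarrow> real" where
  "warped_dist S phi Y t x y = Sup {d x y | d. is_metric_on Y d \<and>
       (\<forall>a\<in>Y. \<forall>b\<in>Y. d a b \<le> t * dist a b) \<and> (\<forall>a\<in>Y. \<forall>s\<in>S. d a (phi s a) \<le> 1)}"

definition is_qi :: "real \<Rightarrow> real \<Rightarrow> 'a set \<Rightarrow> ('a \<Rightarrow> 'a \<Rightarrow> real) \<Rightarrow>
    'b set \<Rightarrow> ('b \<Rightarrow> 'b \<Rightarrow> real) \<Rightarrow> ('a \<Rightarrow> 'b) \<Rightarrow> bool" where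
  "is_qi C A Z dZ W dW g \<longleftrightarrow> g ` Z \<subseteq> W \<and>
     (\<forall>z\<in>Z. \<forall>z'\<in>Z. dZ z z' / C - A \<le> dW (g z) (g z') \<and> dW (g z) (g z') \<le> C * dZ z z' + A) \<and>
     {w\<in>W. \<exists>z\<in>Z. dW w (g z) \<le> A} = W"

end

theory Submission
  imports Defs
begin

text \<open>
  The key fact is a rigidity of orbits at large scale: if \<open>d\<^sub>\<Delta>(x, x') \<le> R\<close> in \<open>\<tau>X\<close> for
  arbitrarily large \<open>\<tau>\<close>, then \<open>x' = h x\<close> for some \<open>h\<close> of word length at most \<open>2R + 1\<close>.
  Indeed, the least cost of a chain from \<open>x\<close>, where continuous moves cost \<open>\<tau>\<close> times their length
  and each jump along a generator costs 1, is a potential that is \<open>\<tau>\<close>-Lipschitz and moves by at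
  most 1 along generators; so it is dominated by twice the warped metric, and some chain of cost
  below \<open>2R + 1\<close> reaches \<open>x'\<close>. For large \<open>\<tau>\<close> its continuous moves are tiny, so by uniform
  continuity of the generators its word sends \<open>x\<close> close to \<open>x'\<close>; as only finitely many short
  words exist, it sends \<open>x\<close> exactly to \<open>x'\<close>.

  Applied to \<open>f y\<close> and \<open>f (s y)\<close> this yields, for every generator \<open>s\<close>, a short \<open>h\<close> with
  \<open>f (s y) = h f y\<close>, and by the cocycle rule an \<open>h\<close> of length linear in \<open>|\<gamma>|\<close> for every \<open>\<gamma>\<close>.
  Freeness makes \<open>h =: \<delta>(\<gamma>, y)\<close> unique, which gives the cocycle identity, and \<open>\<delta>(\<gamma>, \<cdot>)\<close> is
  locally constant because its finitely many possible values have closed level sets. The same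
  argument for \<open>f\<^sup>-\<^sup>1\<close> inverts \<open>\<delta>(\<cdot>, y)\<close> with linear length bounds.
\<close>

section \<open>Words and word length\<close>

abbreviation word_prod :: "('g, 'b) monoid_scheme \<Rightarrow> 'g list \<Rightarrow> 'g" where
  "word_prod G ws \<equiv> foldr (\<lambda>a b. a \<otimes>\<^bsub>G\<^esub> b) ws \<one>\<^bsub>G\<^esub>"

lemma (in monoid) word_prod_closed: "set ws \<subseteq> carrier G \<Longrightarrow> word_prod G ws \<in> carrier G"
  by (induction ws) auto

lemma (in monoid) word_prod_append:
  "set ws \<subseteq> carrier G \<Longrightarrow> set vs \<subseteq> carrier G \<Longrightarrow>
    word_prod G (ws @ vs) = word_prod G ws \<otimes> word_prod G vs"
  by (induction ws) (auto simp: word_prod_closed m_assoc)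

lemma fg_groupD:
  assumes "fg_group G S"
  shows "group G" "finite S" "S \<subseteq> carrier G" "\<And>s. s \<in> S \<Longrightarrow> inv\<^bsub>G\<^esub> s \<in> S"
    "generate G S = carrier G"
  using assms unfolding fg_group_def by auto

lemma fg_group_word_exists:
  assumes "fg_group G S" "g \<in> carrier G"
  shows "\<exists>ws. set ws \<subseteq> S \<and> word_prod G ws = g"
proof -
  have M: "monoid G" using fg_groupD(1)[OF assms(1)] by (rule group.is_monoid)
  note S = fg_groupD(3,4)[OF assms(1)]
  have "g \<in> generate G S" using assms fg_groupD(5) by blast
  then show ?thesis
  proof (induction rule: generate.induct)
    case one then show ?case by (intro exI[of _ "[]"]) simp
  next
    case (incl h) then show ?case using S M by (intro exI[of _ "[h]"]) auto
  next
    case (inv h) then show ?case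
      using S M group.inv_closed[OF fg_groupD(1)[OF assms(1)]] by (intro exI[of _ "[inv\<^bsub>G\<^esub> h]"]) auto
  next
    case (eng h1 h2)
    then obtain w1 w2 where "set w1 \<subseteq> S" "word_prod G w1 = h1" "set w2 \<subseteq> S" "word_prod G w2 = h2"
      by blast
    then show ?case using S monoid.word_prod_append[OF M, of w1 w2] by (intro exI[of _ "w1 @ w2"]) auto
  qed
qed

lemma word_length_attained:
  assumes "fg_group G S" "g \<in> carrier G"
  obtains ws where "length ws = word_length G S g" "set ws \<subseteq> S" "word_prod G ws = g"
proof -
  have "\<exists>n ws. length ws = n \<and> set ws \<subseteq> S \<and> word_prod G ws = g"
    using fg_group_word_exists[OF assms] by blast
  then have "\<exists>ws. length ws = word_length G S g \<and> set ws \<subseteq> S \<and> word_prod G ws = g"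
    unfolding word_length_def by (rule LeastI_ex)
  then show ?thesis using that by blast
qed

lemma word_length_le_length: "set ws \<subseteq> S \<Longrightarrow> word_length G S (word_prod G ws) \<le> length ws"
  unfolding word_length_def by (intro Least_le) blast

lemma word_length_mult:
  assumes "fg_group G S" "a \<in> carrier G" "b \<in> carrier G"
  shows "word_length G S (a \<otimes>\<^bsub>G\<^esub> b) \<le> word_length G S a + word_length G S b"
proof -
  have M: "monoid G" using fg_groupD(1)[OF assms(1)] by (rule group.is_monoid)
  obtain wa wb where wa: "length wa = word_length G S a" "set wa \<subseteq> S" "word_prod G wa = a"
    and wb: "length wb = word_length G S b" "set wb \<subseteq> S" "word_prod G wb = b"
    using word_length_attained[OF assms(1)] assms(2,3) by metis
  have "a \<otimes>\<^bsub>G\<^esub> b = word_prod G (wa @ wb)"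
    using monoid.word_prod_append[OF M, of wa wb] wa wb fg_groupD(3)[OF assms(1)] by auto
  also have "word_length G S \<dots> \<le> length (wa @ wb)" by (rule word_length_le_length) (use wa wb in auto)
  finally show ?thesis using wa wb by simp
qed

lemma finite_word_length_ball:
  assumes "fg_group G S"
  shows "finite {g \<in> carrier G. word_length G S g \<le> n}"
proof (rule finite_subset)
  show "{g \<in> carrier G. word_length G S g \<le> n} \<subseteq> word_prod G ` {ws. set ws \<subseteq> S \<and> length ws \<le> n}"
  proof
    fix g assume "g \<in> {g \<in> carrier G. word_length G S g \<le> n}"
    then obtain ws where "length ws \<le> n" "set ws \<subseteq> S" "word_prod G ws = g"
      using word_length_attained[OF assms] by (metis (no_types, lifting) mem_Collect_eq)
    then show "g \<in> word_prod G ` {ws. set ws \<subseteq> S \<and> length ws \<le> n}" by blast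
  qed
  show "finite (word_prod G ` {ws. set ws \<subseteq> S \<and> length ws \<le> n})"
    using finite_lists_length_le[OF fg_groupD(2)[OF assms]] by blast
qed

section \<open>Free actions\<close>

lemma free_cont_actionD:
  assumes "free_cont_action G Y phi"
  shows free_cont_action_closed: "\<And>g y. g \<in> carrier G \<Longrightarrow> y \<in> Y \<Longrightarrow> phi g y \<in> Y"
    and free_cont_action_one: "\<And>y. y \<in> Y \<Longrightarrow> phi \<one>\<^bsub>G\<^esub> y = y"
    and free_cont_action_mult: "\<And>g h y. g \<in> carrier G \<Longrightarrow> h \<in> carrier G \<Longrightarrow> y \<in> Y \<Longrightarrow>
      phi (g \<otimes>\<^bsub>G\<^esub> h) y = phi g (phi h y)"
    and free_cont_action_continuous: "\<And>g. g \<in> carrier G \<Longrightarrow> continuous_on Y (phi g)"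
    and free_cont_action_free: "\<And>g y. g \<in> carrier G \<Longrightarrow> y \<in> Y \<Longrightarrow> phi g y = y \<Longrightarrow> g = \<one>\<^bsub>G\<^esub>"
  using assms unfolding free_cont_action_def by blast+

lemma free_cont_action_word:
  assumes "monoid H" "free_cont_action H X psi" "set ws \<subseteq> carrier H" "x \<in> X"
  shows "psi (word_prod H ws) x = foldr psi ws x"
  using assms(3)
proof (induction ws)
  case Nil then show ?case using free_cont_action_one[OF assms(2,4)] by simp
next
  case (Cons s ws)
  then show ?case
    using free_cont_action_mult[OF assms(2) _ monoid.word_prod_closed[OF assms(1)] assms(4)] by simp
qed

lemma free_cont_action_inv_cancel:
  assumes "group H" "free_cont_action H X psi" "h \<in> carrier H" "x \<in> X"
  shows "psi (inv\<^bsub>H\<^esub> h) (psi h x) = x"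
  using free_cont_action_mult[OF assms(2) group.inv_closed[OF assms(1,3)] assms(3,4)]
    free_cont_action_one[OF assms(2,4)] group.l_inv[OF assms(1,3)] by simp

lemma free_cont_action_eq_imp_eq:
  assumes "group H" "free_cont_action H X psi" "h \<in> carrier H" "h' \<in> carrier H" "x \<in> X"
    and "psi h x = psi h' x"
  shows "h = h'"
proof -
  have "psi (inv\<^bsub>H\<^esub> h' \<otimes>\<^bsub>H\<^esub> h) x = x"
    using free_cont_action_mult[OF assms(2) group.inv_closed[OF assms(1,4)] assms(3,5)]
      free_cont_action_inv_cancel[OF assms(1,2,4,5)] assms(6) by simp
  then have "inv\<^bsub>H\<^esub> h' \<otimes>\<^bsub>H\<^esub> h = \<one>\<^bsub>H\<^esub>"
    using free_cont_action_free[OF assms(2) _ assms(5)] assms(3,4)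
        monoid.m_closed[OF group.is_monoid[OF assms(1)] group.inv_closed[OF assms(1)]] by blast
  then have "inv\<^bsub>H\<^esub> h = inv\<^bsub>H\<^esub> h'"
    by (rule group.inv_equality[OF assms(1) _ assms(3) group.inv_closed[OF assms(1,4)]])
  then show ?thesis using assms(1,3,4) by (metis group.inv_inv)
qed

section \<open>Warped distance and chains of jumps\<close>

lemma truncated_dist_is_metric:
  fixes X :: "'a::metric_space set"
  assumes "t > 0"
  shows "is_metric_on X (\<lambda>a b. min (t * dist a b) 1)"
  unfolding is_metric_on_def
proof (intro conjI ballI)
  fix a b c :: 'a
  have "t * dist a c \<le> t * dist a b + t * dist b c"
    using dist_triangle[of a c b] assms by (simp add: distrib_left[symmetric])
  moreover have "0 \<le> t * dist a b" "0 \<le> t * dist b c" using assms by auto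
  ultimately show "min (t * dist a c) 1 \<le> min (t * dist a b) 1 + min (t * dist b c) 1"
    by (auto simp: min_def)
qed (use assms in \<open>auto simp: dist_commute min_def\<close>)

lemma le_warped_dist:
  assumes "is_metric_on Y d" "\<forall>a\<in>Y. \<forall>b\<in>Y. d a b \<le> t * dist a b"
    "\<forall>a\<in>Y. \<forall>s\<in>S. d a (phi s a) \<le> 1" "x \<in> Y" "y \<in> Y"
  shows "d x y \<le> warped_dist S phi Y t x y"
  unfolding warped_dist_def
proof (rule cSup_upper)
  show "bdd_above {d x y | d. is_metric_on Y d \<and> (\<forall>a\<in>Y. \<forall>b\<in>Y. d a b \<le> t * dist a b) \<and>
     (\<forall>a\<in>Y. \<forall>s\<in>S. d a (phi s a) \<le> 1)}"
    unfolding bdd_above_def using assms(4,5) by auto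
qed (use assms in blast)

lemma warped_dist_generator_le_1:
  assumes "t > 0" "a \<in> Y" "s \<in> S"
  shows "warped_dist S phi Y t a (phi s a) \<le> 1"
  unfolding warped_dist_def
proof (rule cSup_least)
  have "is_metric_on Y (\<lambda>a b. min (t * dist a b) 1) \<and> (\<forall>a\<in>Y. \<forall>b\<in>Y. min (t * dist a b) 1 \<le> t * dist a b) \<and>
     (\<forall>a\<in>Y. \<forall>s\<in>S. min (t * dist a (phi s a)) 1 \<le> 1)"
    using truncated_dist_is_metric[OF assms(1)] by auto
  then show "{d a (phi s a) | d. is_metric_on Y d \<and> (\<forall>a\<in>Y. \<forall>b\<in>Y. d a b \<le> t * dist a b) \<and>
     (\<forall>a\<in>Y. \<forall>s\<in>S. d a (phi s a) \<le> 1)} \<noteq> {}" by blast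
qed (use assms in auto)

text \<open>A function that is \<open>t\<close>-Lipschitz and moves by at most 1 along generators yields the
  admissible metric \<open>(min (t * dist a b) 1 + \<bar>P a - P b\<bar>) / 2\<close>.\<close>
lemma potential_diff_le_warped_dist:
  fixes X :: "'x::metric_space set"
  assumes "t > 0"
    and lip: "\<And>a b. a \<in> X \<Longrightarrow> b \<in> X \<Longrightarrow> \<bar>P a - P b\<bar> \<le> t * dist a b"
    and jump: "\<And>a s. a \<in> X \<Longrightarrow> s \<in> T \<Longrightarrow> \<bar>P a - P (psi s a)\<bar> \<le> 1"
    and "x \<in> X" "x' \<in> X"
  shows "\<bar>P x - P x'\<bar> \<le> 2 * warped_dist T psi X t x x'"
proof -
  define q where "q a b = min (t * dist a b) 1" for a b :: 'x
  define D where "D a b = \<bar>P a - P b\<bar>" for a b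
  define d where "d a b = q a b / 2 + D a b / 2" for a b
  have q_metric: "is_metric_on X q" unfolding q_def by (rule truncated_dist_is_metric[OF assms(1)])
  have q_le: "0 \<le> q a b" "q a b \<le> t * dist a b" "q a b \<le> 1" for a b
    using assms(1) by (simp_all add: q_def)
  have "is_metric_on X d"
    unfolding is_metric_on_def
  proof (intro conjI ballI)
    fix a b c assume "a \<in> X" "b \<in> X" "c \<in> X"
    then have "q a c \<le> q a b + q b c" using q_metric unfolding is_metric_on_def by blast
    moreover have "D a c \<le> D a b + D b c" by (simp add: D_def)
    ultimately show "d a c \<le> d a b + d b c" unfolding d_def by linarith
  next
    fix a b assume "a \<in> X" "b \<in> X"
    then have q0: "q a b = 0 \<longleftrightarrow> a = b" and "q a b = q b a"
      using q_metric unfolding is_metric_on_def by blast+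
    moreover have D: "0 \<le> D a b" "D a b = D b a" by (simp_all add: D_def abs_minus_commute)
    ultimately show "d a b = d b a" by (simp add: d_def)
    show "0 \<le> d a b" using q_le(1)[of a b] D unfolding d_def by linarith
    show "(d a b = 0) = (a = b)"
    proof
      assume "d a b = 0"
      then have "q a b = 0" using q_le(1)[of a b] D unfolding d_def by linarith
      then show "a = b" using q0 by blast
    qed (simp add: d_def q_def D_def)
  qed
  moreover have "\<forall>a\<in>X. \<forall>b\<in>X. d a b \<le> t * dist a b"
  proof (intro ballI)
    fix a b assume "a \<in> X" "b \<in> X"
    then have "D a b \<le> t * dist a b" using lip by (simp add: D_def)
    then show "d a b \<le> t * dist a b" using q_le(2)[of a b] unfolding d_def by linarith
  qed
  moreover have "\<forall>a\<in>X. \<forall>s\<in>T. d a (psi s a) \<le> 1"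
  proof (intro ballI)
    fix a s assume "a \<in> X" "s \<in> T"
    then have "D a (psi s a) \<le> 1" using jump by (simp add: D_def)
    then show "d a (psi s a) \<le> 1" using q_le(3)[of a "psi s a"] unfolding d_def by linarith
  qed
  ultimately have "d x x' \<le> warped_dist T psi X t x x'" using le_warped_dist assms(4,5) by blast
  then have "D x x' \<le> 2 * warped_dist T psi X t x x'" using q_le(1)[of x x'] unfolding d_def by linarith
  then show ?thesis by (simp add: D_def)
qed

text \<open>A chain from \<open>x\<close> to \<open>z\<close> alternates continuous moves, of total length \<open>e\<close>, with jumps
  along generators; \<open>ws\<close> lists the generators used, the most recent jump first.\<close>
inductive jump_chain :: "('h \<Rightarrow> 'x \<Rightarrow> 'x) \<Rightarrow> 'h set \<Rightarrow> 'x::metric_space set \<Rightarrow> 'x \<Rightarrow> 'x \<Rightarrow> 'h list \<Rightarrow> real \<Rightarrow> bool"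
  for psi T X x where
  start: "x \<in> X \<Longrightarrow> jump_chain psi T X x x [] 0"
| move: "jump_chain psi T X x z ws e \<Longrightarrow> w \<in> X \<Longrightarrow> jump_chain psi T X x w ws (e + dist z w)"
| jump: "jump_chain psi T X x z ws e \<Longrightarrow> s \<in> T \<Longrightarrow> jump_chain psi T X x (psi s z) (s # ws) e"

lemma jump_chainD:
  assumes "jump_chain psi T X x z ws e" "\<forall>s\<in>T. \<forall>z\<in>X. psi s z \<in> X"
  shows "x \<in> X" "z \<in> X" "0 \<le> e" "set ws \<subseteq> T"
  using assms by (induction rule: jump_chain.induct) auto

text \<open>The cap \<open>M\<close> keeps the infimum finite at points that no chain reaches.\<close>
definition chain_potential ::
  "('h \<Rightarrow> 'x \<Rightarrow> 'x) \<Rightarrow> 'h set \<Rightarrow> 'x::metric_space set \<Rightarrow> 'x \<Rightarrow> real \<Rightarrow> real \<Rightarrow> 'x \<Rightarrow> real" where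
  "chain_potential psi T X x t M z =
     Inf (insert M {t * e + real (length ws) | ws e. jump_chain psi T X x z ws e})"

context
  fixes X :: "'x::metric_space set" and psi :: "'h \<Rightarrow> 'x \<Rightarrow> 'x" and T :: "'h set"
    and x :: 'x and t M :: real
  assumes maps: "\<forall>s\<in>T. \<forall>z\<in>X. psi s z \<in> X" and t: "t > 0" and M: "M \<ge> 0"
begin

private lemma chain_cost_nonneg: "jump_chain psi T X x z ws e \<Longrightarrow> 0 \<le> t * e + real (length ws)"
  using jump_chainD(3)[of psi T X x z ws e] maps t by simp

private lemma chain_costs_bdd_below:
  "bdd_below (insert M {t * e + real (length ws) | ws e. jump_chain psi T X x z ws e})"
  unfolding bdd_below_def using chain_cost_nonneg M by (auto intro!: exI[of _ 0])

lemma chain_potential_le_cost: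
  "jump_chain psi T X x z ws e \<Longrightarrow> chain_potential psi T X x t M z \<le> t * e + real (length ws)"
  unfolding chain_potential_def by (rule cInf_lower[OF _ chain_costs_bdd_below]) blast

lemma chain_potential_bounds: "0 \<le> chain_potential psi T X x t M z" "chain_potential psi T X x t M z \<le> M"
  unfolding chain_potential_def
  using chain_cost_nonneg M by (auto intro!: cInf_greatest cInf_lower[OF _ chain_costs_bdd_below])

lemma chain_potential_start: "x \<in> X \<Longrightarrow> chain_potential psi T X x t M x = 0"
  using chain_potential_le_cost[OF jump_chain.start] chain_potential_bounds(1)[of x] by simp

lemma chain_potential_move:
  assumes "w \<in> X"
  shows "chain_potential psi T X x t M w \<le> chain_potential psi T X x t M z + t * dist z w"
proof -
  have "chain_potential psi T X x t M w - t * dist z w \<le> chain_potential psi T X x t M z"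
    unfolding chain_potential_def[of _ _ _ _ _ _ z]
  proof (rule cInf_greatest)
    fix c assume "c \<in> insert M {t * e + real (length ws) | ws e. jump_chain psi T X x z ws e}"
    then consider "c = M" | ws e where "jump_chain psi T X x z ws e" "c = t * e + real (length ws)"
      by blast
    then show "chain_potential psi T X x t M w - t * dist z w \<le> c"
    proof cases
      case 1
      have "0 \<le> t * dist z w" using t by simp
      then show ?thesis using 1 chain_potential_bounds(2)[of w] by linarith
    next
      case 2 then show ?thesis
        using chain_potential_le_cost[OF jump_chain.move[OF 2(1) assms]] by (simp add: algebra_simps)
    qed
  qed auto
  then show ?thesis by simp
qed

lemma chain_potential_jump:
  assumes "s \<in> T"
  shows "chain_potential psi T X x t M (psi s z) \<le> chain_potential psi T X x t M z + 1"
proof -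
  have "chain_potential psi T X x t M (psi s z) - 1 \<le> chain_potential psi T X x t M z"
    unfolding chain_potential_def[of _ _ _ _ _ _ z]
  proof (rule cInf_greatest)
    fix c assume "c \<in> insert M {t * e + real (length ws) | ws e. jump_chain psi T X x z ws e}"
    then consider "c = M" | ws e where "jump_chain psi T X x z ws e" "c = t * e + real (length ws)"
      by blast
    then show "chain_potential psi T X x t M (psi s z) - 1 \<le> c"
    proof cases
      case 1 then show ?thesis using chain_potential_bounds(2)[of "psi s z"] by simp
    next
      case 2 then show ?thesis
        using chain_potential_le_cost[OF jump_chain.jump[OF 2(1) assms]] by simp
    qed
  qed auto
  then show ?thesis by simp
qed

end

lemma short_chain_exists:
  fixes X :: "'x::metric_space set"
  assumes maps: "\<forall>s\<in>T. \<forall>z\<in>X. psi s z \<in> X"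
    and inv: "\<forall>s\<in>T. \<exists>s'\<in>T. \<forall>z\<in>X. psi s' (psi s z) = z"
    and t: "t > 0" and R: "R \<ge> 0" and "x \<in> X" "x' \<in> X"
    and warped: "warped_dist T psi X t x x' \<le> R"
  obtains ws e where "jump_chain psi T X x x' ws e" "t * e + real (length ws) < 2 * R + 1"
proof -
  define M where "M = 2 * R + 1"
  have M: "M \<ge> 0" using R by (simp add: M_def)
  define P where "P = chain_potential psi T X x t M"
  have lip: "\<bar>P a - P b\<bar> \<le> t * dist a b" if "a \<in> X" "b \<in> X" for a b
  proof -
    have "P a \<le> P b + t * dist b a"
      unfolding P_def by (rule chain_potential_move[OF maps t M that(1)])
    moreover have "P b \<le> P a + t * dist a b"
      unfolding P_def by (rule chain_potential_move[OF maps t M that(2)])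
    ultimately show ?thesis by (simp add: dist_commute abs_le_iff)
  qed
  have jump: "\<bar>P a - P (psi s a)\<bar> \<le> 1" if a: "a \<in> X" and s: "s \<in> T" for a s
  proof -
    obtain s' where s': "s' \<in> T" "\<forall>z\<in>X. psi s' (psi s z) = z" using inv s by blast
    have "P (psi s' (psi s a)) \<le> P (psi s a) + 1"
      unfolding P_def by (rule chain_potential_jump[OF maps t M s'(1)])
    moreover have "P (psi s a) \<le> P a + 1"
      unfolding P_def by (rule chain_potential_jump[OF maps t M s])
    ultimately show ?thesis using s'(2) a by (simp add: abs_le_iff)
  qed
  have "P x' \<le> 2 * R"
    using potential_diff_le_warped_dist[where T=T and psi=psi and P=P, OF t lip jump \<open>x \<in> X\<close>
        \<open>x' \<in> X\<close>] warped
      chain_potential_start[OF maps t M \<open>x \<in> X\<close>] by (simp add: P_def)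
  then have "Inf (insert M {t * e + real (length ws) | ws e. jump_chain psi T X x x' ws e}) < M"
    by (simp add: P_def chain_potential_def M_def)
  from cInf_lessD[OF insert_not_empty this]
  obtain c where "c \<in> {t * e + real (length ws) | ws e. jump_chain psi T X x x' ws e}" "c < M"
    by blast
  then show ?thesis using that unfolding M_def by blast
qed

section \<open>Orbit points at bounded warped distance on all large scales\<close>

definition jump_modulus :: "('h \<Rightarrow> 'x \<Rightarrow> 'x) \<Rightarrow> 'h set \<Rightarrow> 'x::metric_space set \<Rightarrow> real \<Rightarrow> real" where
  "jump_modulus psi T X r =
     Sup (insert 0 {dist (psi s a) (psi s b) | s a b. s \<in> T \<and> a \<in> X \<and> b \<in> X \<and> dist a b \<le> r})"

context
  fixes X :: "'x::metric_space set" and psi :: "'h \<Rightarrow> 'x \<Rightarrow> 'x" and T :: "'h set"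
  assumes maps: "\<forall>s\<in>T. \<forall>z\<in>X. psi s z \<in> X" and bounded: "bounded X"
begin

private lemma jump_modulus_bdd:
  "bdd_above (insert 0 {dist (psi s a) (psi s b) | s a b. s \<in> T \<and> a \<in> X \<and> b \<in> X \<and> dist a b \<le> r})"
proof -
  obtain B where "\<forall>p\<in>X. \<forall>q\<in>X. dist p q \<le> B" using bounded bounded_two_points by blast
  then show ?thesis
    using maps unfolding bdd_above_def by (auto intro!: exI[of _ "max 0 B"] simp: le_max_iff_disj)
qed

lemma jump_modulus_ge:
  "s \<in> T \<Longrightarrow> a \<in> X \<Longrightarrow> b \<in> X \<Longrightarrow> dist a b \<le> r \<Longrightarrow> dist (psi s a) (psi s b) \<le> jump_modulus psi T X r"
  unfolding jump_modulus_def by (rule cSup_upper[OF _ jump_modulus_bdd]) blast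

lemma jump_modulus_nonneg: "0 \<le> jump_modulus psi T X r"
  unfolding jump_modulus_def by (rule cSup_upper[OF _ jump_modulus_bdd]) simp

lemma mono_jump_modulus: "mono (jump_modulus psi T X)"
proof
  fix r r' :: real assume "r \<le> r'"
  then show "jump_modulus psi T X r \<le> jump_modulus psi T X r'"
    unfolding jump_modulus_def by (intro cSup_subset_mono jump_modulus_bdd) fastforce+
qed

end

lemma jump_modulus_small:
  fixes X :: "'x::metric_space set"
  assumes maps: "\<forall>s\<in>T. \<forall>z\<in>X. psi s z \<in> X" and "compact X" "finite T"
    and cont: "\<forall>s\<in>T. continuous_on X (psi s)" and "\<epsilon> > 0"
  shows "\<exists>\<rho>>0. \<forall>r<\<rho>. jump_modulus psi T X r \<le> \<epsilon>"
proof -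
  have "\<forall>s\<in>T. \<exists>\<rho>>0. \<forall>a\<in>X. \<forall>b\<in>X. dist b a < \<rho> \<longrightarrow> dist (psi s b) (psi s a) < \<epsilon>"
    using cont compact_uniformly_continuous[OF _ \<open>compact X\<close>] \<open>\<epsilon> > 0\<close>
    unfolding uniformly_continuous_on_def by blast
  from bchoice[OF this] obtain \<rho>s where \<rho>s: "\<forall>s\<in>T. \<rho>s s > 0 \<and>
      (\<forall>a\<in>X. \<forall>b\<in>X. dist b a < \<rho>s s \<longrightarrow> dist (psi s b) (psi s a) < \<epsilon>)"
    by blast
  define \<rho> where "\<rho> = Min (insert 1 (\<rho>s ` T))"
  have "\<rho> > 0" using \<rho>s \<open>finite T\<close> by (simp add: \<rho>_def)
  moreover have "jump_modulus psi T X r \<le> \<epsilon>" if "r < \<rho>" for r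
    unfolding jump_modulus_def
  proof (rule cSup_least)
    fix c assume "c \<in> insert 0 {dist (psi s a) (psi s b) | s a b. s \<in> T \<and> a \<in> X \<and> b \<in> X \<and> dist a b \<le> r}"
    then consider "c = 0"
      | s a b where "c = dist (psi s a) (psi s b)" "s \<in> T" "a \<in> X" "b \<in> X" "dist a b \<le> r"
      by blast
    then show "c \<le> \<epsilon>"
    proof cases
      case 2
      then have "\<rho> \<le> \<rho>s s" using \<open>finite T\<close> by (simp add: \<rho>_def)
      then show ?thesis using 2 \<rho>s \<open>r < \<rho>\<close> by (fastforce simp: dist_commute)
    qed (use \<open>\<epsilon> > 0\<close> in simp)
  qed simp
  ultimately show ?thesis by blast
qed

text \<open>\<open>iterated_modulus w k e\<close> bounds how far a chain with \<open>k\<close> jumps and total move length \<open>e\<close>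
  drifts from the word applied to its start, \<open>w\<close> being a modulus of continuity of the jumps.\<close>
fun iterated_modulus :: "(real \<Rightarrow> real) \<Rightarrow> nat \<Rightarrow> real \<Rightarrow> real" where
  "iterated_modulus w 0 e = e"
| "iterated_modulus w (Suc k) e = e + w (iterated_modulus w k e)"

lemma iterated_modulus_mono:
  assumes "mono w" "e \<le> e'"
  shows "iterated_modulus w k e \<le> iterated_modulus w k e'"
proof (induction k)
  case (Suc k)
  then show ?case using monoD[OF assms(1) Suc.IH] assms(2) by simp
qed (simp add: assms(2))

lemma iterated_modulus_add:
  assumes "mono w" "0 \<le> d"
  shows "iterated_modulus w k e + d \<le> iterated_modulus w k (e + d)"
proof (cases k)
  case (Suc k')
  have "w (iterated_modulus w k' e) \<le> w (iterated_modulus w k' (e + d))"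
    using assms by (intro monoD[OF assms(1)] iterated_modulus_mono) auto
  then show ?thesis using Suc by simp
qed simp

lemma iterated_modulus_le_Suc:
  assumes "mono w" "\<And>r. 0 \<le> w r"
  shows "iterated_modulus w k e \<le> iterated_modulus w (Suc k) e"
proof (induction k)
  case (Suc k)
  then show ?case using monoD[OF assms(1) Suc.IH] by simp
qed (simp add: assms(2))

lemma iterated_modulus_small:
  assumes small: "\<And>\<epsilon>. \<epsilon> > 0 \<Longrightarrow> \<exists>\<rho>>0. \<forall>r<\<rho>. w r \<le> \<epsilon>"
  shows "\<epsilon> > 0 \<Longrightarrow> \<exists>\<eta>>0. \<forall>e. 0 \<le> e \<and> e < \<eta> \<longrightarrow> iterated_modulus w k e \<le> \<epsilon>"
proof (induction k arbitrary: \<epsilon>)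
  case 0 then show ?case by (intro exI[of _ \<epsilon>]) auto
next
  case (Suc k)
  obtain \<rho> where \<rho>: "\<rho> > 0" "\<forall>r<\<rho>. w r \<le> \<epsilon> / 2" using small[of "\<epsilon> / 2"] Suc.prems by auto
  obtain \<eta> where \<eta>: "\<eta> > 0" "\<forall>e. 0 \<le> e \<and> e < \<eta> \<longrightarrow> iterated_modulus w k e \<le> \<rho> / 2"
    using Suc.IH[of "\<rho> / 2"] \<rho>(1) by auto
  show ?case
  proof (intro exI[of _ "min \<eta> (\<epsilon> / 2)"] conjI allI impI)
    fix e assume e: "0 \<le> e \<and> e < min \<eta> (\<epsilon> / 2)"
    then have "iterated_modulus w k e \<le> \<rho> / 2" using \<eta>(2) by simp
    then have "w (iterated_modulus w k e) \<le> \<epsilon> / 2" using \<rho> by simp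
    then show "iterated_modulus w (Suc k) e \<le> \<epsilon>" using e by simp
  qed (use \<eta> Suc.prems in simp)
qed

lemma jump_chain_drift:
  assumes "jump_chain psi T X x z ws e" and maps: "\<forall>s\<in>T. \<forall>z\<in>X. psi s z \<in> X" and "bounded X"
  shows "dist z (foldr psi ws x) \<le> iterated_modulus (jump_modulus psi T X) (length ws) e"
  using assms(1)
proof (induction rule: jump_chain.induct)
  case (move z ws e w)
  have "dist w (foldr psi ws x) \<le> dist z (foldr psi ws x) + dist z w"
    using dist_triangle2[of w "foldr psi ws x" z] by (simp add: dist_commute add.commute)
  also have "\<dots> \<le> iterated_modulus (jump_modulus psi T X) (length ws) e + dist z w" using move.IH by simp
  also have "\<dots> \<le> iterated_modulus (jump_modulus psi T X) (length ws) (e + dist z w)"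
    by (rule iterated_modulus_add[OF mono_jump_modulus[OF maps \<open>bounded X\<close>]]) simp
  finally show ?case .
next
  case (jump z ws e s)
  have "z \<in> X" "x \<in> X" "0 \<le> e" "set ws \<subseteq> T" using jump_chainD[OF jump.hyps(1) maps] by auto
  moreover have "foldr psi vs x \<in> X" if "set vs \<subseteq> T" for vs
    using that \<open>x \<in> X\<close> maps by (induction vs) auto
  ultimately show ?case
    using jump_modulus_ge[OF maps \<open>bounded X\<close> jump.hyps(2) _ _ jump.IH] by simp
qed simp

lemma word_of_bounded_warped_dist:
  fixes X :: "'x::metric_space set"
  assumes "compact X" "finite T"
    and maps: "\<forall>s\<in>T. \<forall>z\<in>X. psi s z \<in> X"
    and inv: "\<forall>s\<in>T. \<exists>s'\<in>T. \<forall>z\<in>X. psi s' (psi s z) = z"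
    and cont: "\<forall>s\<in>T. continuous_on X (psi s)"
    and "x \<in> X" "x' \<in> X" "R \<ge> 0"
    and large: "\<forall>\<tau>0. \<exists>\<tau>\<ge>\<tau>0. \<tau> > 0 \<and> warped_dist T psi X \<tau> x x' \<le> R"
  obtains ws where "set ws \<subseteq> T" "length ws \<le> nat \<lceil>2 * R + 1\<rceil>" "foldr psi ws x = x'"
proof -
  define K where "K = nat \<lceil>2 * R + 1\<rceil>"
  define w where "w = jump_modulus psi T X"
  have "bounded X" using \<open>compact X\<close> by (rule compact_imp_bounded)
  have "finite ((\<lambda>ws. foldr psi ws x) ` {ws. set ws \<subseteq> T \<and> length ws \<le> K})"
    using finite_lists_length_le[OF \<open>finite T\<close>] by blast
  from finite_set_avoid[OF this, of x'] obtain m where "m > 0"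
    and m: "\<And>ws. set ws \<subseteq> T \<Longrightarrow> length ws \<le> K \<Longrightarrow> foldr psi ws x \<noteq> x' \<Longrightarrow> m \<le> dist x' (foldr psi ws x)"
    by blast
  \<comment> \<open>A chain that is cheap at a large scale \<open>\<tau>\<close> has almost no continuous moves, so its word
    lands within \<open>m / 2\<close> of \<open>x'\<close>; among words of length at most \<open>K\<close> only \<open>x'\<close> itself is that close.\<close>
  obtain \<eta> where "\<eta> > 0" and \<eta>: "\<forall>e. 0 \<le> e \<and> e < \<eta> \<longrightarrow> iterated_modulus w K e \<le> m / 2"
    using iterated_modulus_small[of w "m / 2" K] jump_modulus_small[OF maps \<open>compact X\<close> \<open>finite T\<close> cont]
      \<open>m > 0\<close> unfolding w_def by auto
  obtain \<tau> where "\<tau> \<ge> (2 * R + 1) / \<eta>" "\<tau> > 0" "warped_dist T psi X \<tau> x x' \<le> R"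
    using large by blast
  then obtain ws e where ch: "jump_chain psi T X x x' ws e" and cost: "\<tau> * e + real (length ws) < 2 * R + 1"
    using short_chain_exists[OF maps inv _ \<open>R \<ge> 0\<close> \<open>x \<in> X\<close> \<open>x' \<in> X\<close>] by blast
  have "0 \<le> e" "set ws \<subseteq> T" using jump_chainD[OF ch maps] by auto
  have "length ws \<le> K"
    using cost \<open>0 \<le> e\<close> \<open>\<tau> > 0\<close> real_nat_ceiling_ge[of "2 * R + 1"] unfolding K_def
    by (smt (verit) of_nat_le_iff zero_le_mult_iff)
  have "2 * R + 1 \<le> \<tau> * \<eta>" using \<open>\<tau> \<ge> (2 * R + 1) / \<eta>\<close> \<open>\<eta> > 0\<close> by (simp add: field_simps)
  then have "e < \<eta>" using cost \<open>\<tau> > 0\<close> by (smt (verit) mult_left_mono of_nat_0_le_iff)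
  have "dist x' (foldr psi ws x) \<le> iterated_modulus w (length ws) e"
    unfolding w_def by (rule jump_chain_drift[OF ch maps \<open>bounded X\<close>])
  also have "\<dots> \<le> iterated_modulus w K e"
    using iterated_modulus_le_Suc[OF mono_jump_modulus jump_modulus_nonneg, OF maps \<open>bounded X\<close> maps \<open>bounded X\<close>]
    by (intro lift_Suc_mono_le[OF _ \<open>length ws \<le> K\<close>]) (simp add: w_def)
  also have "\<dots> \<le> m / 2" using \<eta> \<open>0 \<le> e\<close> \<open>e < \<eta>\<close> by blast
  finally have "foldr psi ws x = x'" using m[OF \<open>set ws \<subseteq> T\<close> \<open>length ws \<le> K\<close>] \<open>m > 0\<close> by fastforce
  then show ?thesis using that \<open>set ws \<subseteq> T\<close> \<open>length ws \<le> K\<close> unfolding K_def by blast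
qed

lemma orbit_element_of_bounded_warped_dist:
  assumes fg: "fg_group H T" and "compact X" and act: "free_cont_action H X psi"
    and "x \<in> X" "x' \<in> X" "R \<ge> 0"
    and large: "\<forall>\<tau>0. \<exists>\<tau>\<ge>\<tau>0. \<tau> > 0 \<and> warped_dist T psi X \<tau> x x' \<le> R"
  obtains h where "h \<in> carrier H" "word_length H T h \<le> nat \<lceil>2 * R + 1\<rceil>" "psi h x = x'"
proof -
  note T = fg_groupD[OF fg]
  have "\<forall>s\<in>T. \<exists>s'\<in>T. \<forall>z\<in>X. psi s' (psi s z) = z"
    using free_cont_action_inv_cancel[OF T(1) act] T(3,4) by blast
  then obtain ws where ws: "set ws \<subseteq> T" "length ws \<le> nat \<lceil>2 * R + 1\<rceil>" "foldr psi ws x = x'"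
    using word_of_bounded_warped_dist[OF \<open>compact X\<close> T(2) _ _ _ assms(4-6) large]
      free_cont_action_closed[OF act] free_cont_action_continuous[OF act] T(3) by blast
  have "psi (word_prod H ws) x = x'"
    using free_cont_action_word[OF group.is_monoid[OF T(1)] act] ws T(3) \<open>x \<in> X\<close> by auto
  moreover have "word_prod H ws \<in> carrier H"
    using monoid.word_prod_closed[OF group.is_monoid[OF T(1)]] ws(1) T(3) by blast
  moreover have "word_length H T (word_prod H ws) \<le> nat \<lceil>2 * R + 1\<rceil>"
    using word_length_le_length[where G=H, OF ws(1)] ws(2) by linarith
  ultimately show ?thesis using that by blast
qed

section \<open>Orbit displacement of a warped quasi-isometry\<close>

lemma generator_orbit_bound:
  assumes fgG: "fg_group G S" and fgH: "fg_group H T" and "compact X"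
    and actG: "free_cont_action G Y phi" and actH: "free_cont_action H X psi"
    and F: "\<forall>y\<in>Y. F y \<in> X" and scales: "tau ` I = {0<..}" "\<forall>i\<in>I. t i > 0"
    and bound: "\<forall>i\<in>I. \<forall>a\<in>Y. \<forall>b\<in>Y.
      warped_dist T psi X (tau i) (F a) (F b) \<le> K * warped_dist S phi Y (t i) a b + L"
    and "K \<ge> 0" "L \<ge> 0" "s \<in> S" "y \<in> Y"
  obtains h where "h \<in> carrier H" "word_length H T h \<le> nat \<lceil>2 * (K + L) + 1\<rceil>"
    "F (phi s y) = psi h (F y)"
proof -
  have "phi s y \<in> Y" using free_cont_action_closed[OF actG] fg_groupD(3)[OF fgG] \<open>s \<in> S\<close> \<open>y \<in> Y\<close> by blast
  have "\<exists>\<tau>\<ge>\<tau>0. \<tau> > 0 \<and> warped_dist T psi X \<tau> (F y) (F (phi s y)) \<le> K + L" for \<tau>0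
  proof -
    obtain i where i: "i \<in> I" "tau i = max \<tau>0 1"
      using scales(1) by (metis greaterThan_iff image_iff max.strict_coboundedI2 zero_less_one)
    have "warped_dist T psi X (tau i) (F y) (F (phi s y)) \<le> K * warped_dist S phi Y (t i) y (phi s y) + L"
      using bound i(1) \<open>y \<in> Y\<close> \<open>phi s y \<in> Y\<close> by blast
    also have "\<dots> \<le> K * 1 + L"
      using scales(2) i(1) mult_left_mono[OF warped_dist_generator_le_1 \<open>K \<ge> 0\<close>, of "t i" y Y s S phi]
        \<open>y \<in> Y\<close> \<open>s \<in> S\<close> by simp
    finally show ?thesis using i(2) by (intro exI[of _ "tau i"]) auto
  qed
  then show ?thesis
    using orbit_element_of_bounded_warped_dist[OF fgH \<open>compact X\<close> actH] F \<open>y \<in> Y\<close> \<open>phi s y \<in> Y\<close>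
      \<open>K \<ge> 0\<close> \<open>L \<ge> 0\<close> that by (metis add_nonneg_nonneg)
qed

lemma word_orbit_bound:
  assumes fgG: "fg_group G S" and fgH: "fg_group H T"
    and actG: "free_cont_action G Y phi" and actH: "free_cont_action H X psi"
    and F: "\<forall>y\<in>Y. F y \<in> X"
    and step: "\<And>s y. s \<in> S \<Longrightarrow> y \<in> Y \<Longrightarrow> \<exists>h\<in>carrier H. word_length H T h \<le> K \<and> F (phi s y) = psi h (F y)"
    and "\<gamma> \<in> carrier G" "y \<in> Y"
  shows "\<exists>h\<in>carrier H. word_length H T h \<le> K * word_length G S \<gamma> \<and> F (phi \<gamma> y) = psi h (F y)"
proof -
  have MG: "monoid G" and MH: "monoid H"
    using fg_groupD(1)[OF fgG] fg_groupD(1)[OF fgH] by (simp_all add: group.is_monoid)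
  note SG = fg_groupD(3)[OF fgG]
  have "\<exists>h\<in>carrier H. word_length H T h \<le> K * length ws \<and> F (phi (word_prod G ws) y) = psi h (F y)"
    if "set ws \<subseteq> S" "y \<in> Y" for ws y
    using that
  proof (induction ws arbitrary: y)
    case Nil
    have "word_length H T \<one>\<^bsub>H\<^esub> = 0" using word_length_le_length[of "[]" T H] by simp
    then show ?case
      using free_cont_action_one[OF actG Nil(2)] free_cont_action_one[OF actH] F Nil(2) monoid.one_closed[OF MH]
      by force
  next
    case (Cons s ws)
    define g where "g = word_prod G ws"
    have g: "g \<in> carrier G" "phi g y \<in> Y"
      using monoid.word_prod_closed[OF MG] Cons.prems SG free_cont_action_closed[OF actG] unfolding g_def by auto
    obtain h2 where h2: "h2 \<in> carrier H" "word_length H T h2 \<le> K * length ws" "F (phi g y) = psi h2 (F y)"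
      using Cons.IH Cons.prems unfolding g_def by auto
    have "s \<in> S" using Cons.prems(1) by simp
    then obtain h1 where h1: "h1 \<in> carrier H" "word_length H T h1 \<le> K"
      "F (phi s (phi g y)) = psi h1 (F (phi g y))"
      using step g(2) by blast
    have "F (phi (s \<otimes>\<^bsub>G\<^esub> g) y) = psi (h1 \<otimes>\<^bsub>H\<^esub> h2) (F y)"
      using free_cont_action_mult[OF actG _ g(1) Cons.prems(2)] free_cont_action_mult[OF actH h1(1) h2(1)]
        h1(3) h2(3) F Cons.prems SG by auto
    moreover have "word_length H T (h1 \<otimes>\<^bsub>H\<^esub> h2) \<le> K * length (s # ws)"
      using word_length_mult[OF fgH h1(1) h2(1)] h1(2) h2(2) by simp
    ultimately show ?case using monoid.m_closed[OF MH h1(1) h2(1)] unfolding g_def by auto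
  qed
  then show ?thesis
    using word_length_attained[OF fgG \<open>\<gamma> \<in> carrier G\<close>] \<open>y \<in> Y\<close> by metis
qed

lemma orbit_displacement_bound:
  assumes "fg_group G S" "fg_group H T" "compact X"
    and "free_cont_action G Y phi" "free_cont_action H X psi"
    and "\<forall>y\<in>Y. F y \<in> X" "tau ` I = {0<..}" "\<forall>i\<in>I. t i > 0"
    and "\<forall>i\<in>I. \<forall>a\<in>Y. \<forall>b\<in>Y.
      warped_dist T psi X (tau i) (F a) (F b) \<le> K * warped_dist S phi Y (t i) a b + L"
    and "K \<ge> 0" "L \<ge> 0"
  shows "\<exists>N. \<forall>\<gamma>\<in>carrier G. \<forall>y\<in>Y.
    \<exists>h\<in>carrier H. word_length H T h \<le> N * word_length G S \<gamma> \<and> F (phi \<gamma> y) = psi h (F y)"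
  using word_orbit_bound[OF assms(1,2,4,5,6)] generator_orbit_bound[OF assms] by metis

section \<open>The orbit cocycle\<close>

lemma continuous_map_discrete_prod:
  assumes "\<forall>\<gamma>\<in>A. \<forall>y\<in>Y. d \<gamma> y \<in> B"
    and "\<And>\<gamma> U. \<gamma> \<in> A \<Longrightarrow> openin (top_of_set Y) {y\<in>Y. d \<gamma> y \<in> U}"
  shows "continuous_map (prod_topology (discrete_topology A) (top_of_set Y)) (discrete_topology B)
    (\<lambda>(\<gamma>, y). d \<gamma> y)"
  unfolding continuous_map_def
proof (intro conjI allI impI)
  show "(\<lambda>(\<gamma>, y). d \<gamma> y) \<in> topspace (prod_topology (discrete_topology A) (top_of_set Y)) \<rightarrow>
      topspace (discrete_topology B)"
    using assms(1) by auto
  fix U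
  have "{p \<in> topspace (prod_topology (discrete_topology A) (top_of_set Y)). (\<lambda>(\<gamma>, y). d \<gamma> y) p \<in> U}
      = (\<Union>\<gamma>\<in>A. {\<gamma>} \<times> {y\<in>Y. d \<gamma> y \<in> U})" by auto
  moreover have "openin (prod_topology (discrete_topology A) (top_of_set Y)) ({\<gamma>} \<times> {y\<in>Y. d \<gamma> y \<in> U})"
    if "\<gamma> \<in> A" for \<gamma>
    using assms(2)[OF that] that by (simp add: openin_prod_Times_iff)
  ultimately show "openin (prod_topology (discrete_topology A) (top_of_set Y))
      {p \<in> topspace (prod_topology (discrete_topology A) (top_of_set Y)). (\<lambda>(\<gamma>, y). d \<gamma> y) p \<in> U}"
    by auto
qed

locale orbit_bounded_homeomorphism =
  fixes G :: "('g, 'c) monoid_scheme" and S :: "'g set"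
    and H :: "('h, 'e) monoid_scheme" and T :: "'h set"
    and Y :: "'y::metric_space set" and X :: "'x::metric_space set"
    and phi :: "'g \<Rightarrow> 'y \<Rightarrow> 'y" and psi :: "'h \<Rightarrow> 'x \<Rightarrow> 'x"
    and f :: "'y \<Rightarrow> 'x" and g :: "'x \<Rightarrow> 'y" and K1 K2 :: nat
  assumes fgG: "fg_group G S" and fgH: "fg_group H T"
    and actG: "free_cont_action G Y phi" and actH: "free_cont_action H X psi"
    and homeo: "homeomorphism Y X f g"
    and forward: "\<forall>\<gamma>\<in>carrier G. \<forall>y\<in>Y.
      \<exists>h\<in>carrier H. word_length H T h \<le> K1 * word_length G S \<gamma> \<and> f (phi \<gamma> y) = psi h (f y)"
    and backward: "\<forall>h\<in>carrier H. \<forall>x\<in>X.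
      \<exists>\<gamma>\<in>carrier G. word_length G S \<gamma> \<le> K2 * word_length H T h \<and> g (psi h x) = phi \<gamma> (g x)"
begin

definition orbit_cocycle :: "'g \<Rightarrow> 'y \<Rightarrow> 'h" where
  "orbit_cocycle \<gamma> y = (THE h. h \<in> carrier H \<and> psi h (f y) = f (phi \<gamma> y))"

lemma f_in: "y \<in> Y \<Longrightarrow> f y \<in> X" and g_f: "y \<in> Y \<Longrightarrow> g (f y) = y" and f_g: "x \<in> X \<Longrightarrow> f (g x) = x"
  using homeo unfolding homeomorphism_def by auto

lemma orbit_cocycle_eqI:
  assumes "y \<in> Y" "h \<in> carrier H" "psi h (f y) = f (phi \<gamma> y)"
  shows "orbit_cocycle \<gamma> y = h"
  unfolding orbit_cocycle_def
proof (rule the_equality)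
  fix h' assume "h' \<in> carrier H \<and> psi h' (f y) = f (phi \<gamma> y)"
  then show "h' = h"
    using free_cont_action_eq_imp_eq[OF fg_groupD(1)[OF fgH] actH _ assms(2) f_in[OF assms(1)]] assms(3) by auto
qed (use assms in blast)

lemma orbit_cocycle:
  assumes "\<gamma> \<in> carrier G" "y \<in> Y"
  shows orbit_cocycle_closed: "orbit_cocycle \<gamma> y \<in> carrier H"
    and orbit_cocycle_transports: "psi (orbit_cocycle \<gamma> y) (f y) = f (phi \<gamma> y)"
    and word_length_orbit_cocycle_le: "word_length H T (orbit_cocycle \<gamma> y) \<le> K1 * word_length G S \<gamma>"
proof -
  obtain h where "h \<in> carrier H" "word_length H T h \<le> K1 * word_length G S \<gamma>" "f (phi \<gamma> y) = psi h (f y)"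
    using forward assms by blast
  moreover have "orbit_cocycle \<gamma> y = h" using orbit_cocycle_eqI[OF assms(2)] calculation by simp
  ultimately show "orbit_cocycle \<gamma> y \<in> carrier H" "psi (orbit_cocycle \<gamma> y) (f y) = f (phi \<gamma> y)"
    "word_length H T (orbit_cocycle \<gamma> y) \<le> K1 * word_length G S \<gamma>" by simp_all
qed

lemma orbit_cocycle_mult:
  assumes "\<gamma>1 \<in> carrier G" "\<gamma>2 \<in> carrier G" "y \<in> Y"
  shows "orbit_cocycle \<gamma>2 (phi \<gamma>1 y) \<otimes>\<^bsub>H\<^esub> orbit_cocycle \<gamma>1 y = orbit_cocycle (\<gamma>2 \<otimes>\<^bsub>G\<^esub> \<gamma>1) y"
proof -
  have y1: "phi \<gamma>1 y \<in> Y" by (rule free_cont_action_closed[OF actG assms(1,3)])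
  note d1 = orbit_cocycle[OF assms(1,3)] and d2 = orbit_cocycle[OF assms(2) y1]
  have "psi (orbit_cocycle \<gamma>2 (phi \<gamma>1 y) \<otimes>\<^bsub>H\<^esub> orbit_cocycle \<gamma>1 y) (f y) =
      psi (orbit_cocycle \<gamma>2 (phi \<gamma>1 y)) (psi (orbit_cocycle \<gamma>1 y) (f y))"
    by (rule free_cont_action_mult[OF actH d2(1) d1(1) f_in[OF assms(3)]])
  also have "\<dots> = f (phi (\<gamma>2 \<otimes>\<^bsub>G\<^esub> \<gamma>1) y)"
    using d1(2) d2(2) free_cont_action_mult[OF actG assms(2,1,3)] by simp
  finally show ?thesis
    using monoid.m_closed[OF group.is_monoid[OF fg_groupD(1)[OF fgH]] d2(1) d1(1)]
    by (intro orbit_cocycle_eqI[symmetric] assms(3))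
qed

lemma orbit_cocycle_inj:
  assumes "\<gamma> \<in> carrier G" "\<gamma>' \<in> carrier G" "y \<in> Y" "orbit_cocycle \<gamma> y = orbit_cocycle \<gamma>' y"
  shows "\<gamma> = \<gamma>'"
proof -
  have "f (phi \<gamma> y) = f (phi \<gamma>' y)"
    using orbit_cocycle_transports[OF assms(1,3)] orbit_cocycle_transports[OF assms(2,3)] assms(4) by simp
  then have "g (f (phi \<gamma> y)) = g (f (phi \<gamma>' y))" by simp
  then have "phi \<gamma> y = phi \<gamma>' y"
    using g_f free_cont_action_closed[OF actG] assms(1-3) by simp
  then show ?thesis by (rule free_cont_action_eq_imp_eq[OF fg_groupD(1)[OF fgG] actG assms(1-3)])
qed

lemma orbit_cocycle_surj:
  assumes "h \<in> carrier H" "y \<in> Y"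
  obtains \<gamma> where "\<gamma> \<in> carrier G" "word_length G S \<gamma> \<le> K2 * word_length H T h" "orbit_cocycle \<gamma> y = h"
proof -
  obtain \<gamma> where \<gamma>: "\<gamma> \<in> carrier G" "word_length G S \<gamma> \<le> K2 * word_length H T h"
    "g (psi h (f y)) = phi \<gamma> y"
    using backward assms f_in g_f by fastforce
  then have "f (g (psi h (f y))) = f (phi \<gamma> y)" by simp
  then have "psi h (f y) = f (phi \<gamma> y)"
    using f_g free_cont_action_closed[OF actH assms(1) f_in[OF assms(2)]] by simp
  then show ?thesis using that \<gamma>(1,2) orbit_cocycle_eqI[OF assms(2,1)] by blast
qed

lemma bij_betw_orbit_cocycle:
  assumes "y \<in> Y"
  shows "bij_betw (\<lambda>\<gamma>. orbit_cocycle \<gamma> y) (carrier G) (carrier H)"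
proof (rule bij_betw_imageI)
  show "inj_on (\<lambda>\<gamma>. orbit_cocycle \<gamma> y) (carrier G)"
    using orbit_cocycle_inj assms by (auto intro: inj_onI)
  show "(\<lambda>\<gamma>. orbit_cocycle \<gamma> y) ` carrier G = carrier H"
  proof
    show "(\<lambda>\<gamma>. orbit_cocycle \<gamma> y) ` carrier G \<subseteq> carrier H" using orbit_cocycle_closed assms by blast
    show "carrier H \<subseteq> (\<lambda>\<gamma>. orbit_cocycle \<gamma> y) ` carrier G"
    proof
      fix h assume "h \<in> carrier H"
      then obtain \<gamma> where "\<gamma> \<in> carrier G" "orbit_cocycle \<gamma> y = h" using orbit_cocycle_surj assms by metis
      then show "h \<in> (\<lambda>\<gamma>. orbit_cocycle \<gamma> y) ` carrier G" by blast
    qed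
  qed
qed

lemma word_length_le_orbit_cocycle:
  assumes "\<gamma> \<in> carrier G" "y \<in> Y"
  shows "word_length G S \<gamma> \<le> K2 * word_length H T (orbit_cocycle \<gamma> y)"
proof -
  obtain \<gamma>' where "\<gamma>' \<in> carrier G" "word_length G S \<gamma>' \<le> K2 * word_length H T (orbit_cocycle \<gamma> y)"
    "orbit_cocycle \<gamma>' y = orbit_cocycle \<gamma> y"
    using orbit_cocycle_surj[OF orbit_cocycle_closed[OF assms] assms(2)] by blast
  moreover have "\<gamma>' = \<gamma>" using orbit_cocycle_inj calculation(1,3) assms by blast
  ultimately show ?thesis by simp
qed

text \<open>Only the finitely many \<open>h\<close> allowed by the length bound can occur, and each level set
  \<open>{y. psi h (f y) = f (phi \<gamma> y)}\<close> is closed; so the preimage of any set is a complement of a finite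
  union of closed sets.\<close>
lemma openin_orbit_cocycle_preimage:
  assumes "\<gamma> \<in> carrier G"
  shows "openin (top_of_set Y) {y \<in> Y. orbit_cocycle \<gamma> y \<in> U}"
proof -
  define B where "B = {h \<in> carrier H. word_length H T h \<le> K1 * word_length G S \<gamma>}"
  define E where "E h = {y \<in> Y. psi h (f y) = f (phi \<gamma> y)}" for h
  have contf: "continuous_on Y f" using homeo unfolding homeomorphism_def by blast
  have "closedin (top_of_set Y) (E h)" if "h \<in> carrier H" for h
  proof -
    have "continuous_on Y (\<lambda>y. psi h (f y))"
      by (rule continuous_on_compose2[OF free_cont_action_continuous[OF actH that] contf]) (use f_in in blast)
    moreover have "continuous_on Y (\<lambda>y. f (phi \<gamma> y))"
      by (rule continuous_on_compose2[OF contf free_cont_action_continuous[OF actG assms]])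
        (use free_cont_action_closed[OF actG assms] in blast)
    ultimately have "closedin (top_of_set Y) {y \<in> topspace (top_of_set Y). psi h (f y) = f (phi \<gamma> y)}"
      by (intro closedin_continuous_maps_eq[OF Hausdorff_space_euclidean]) simp_all
    then show ?thesis unfolding E_def by simp
  qed
  then have "closedin (top_of_set Y) (\<Union>(E ` (B - U)))"
    using finite_word_length_ball[OF fgH] by (intro closedin_Union) (auto simp: B_def)
  moreover have "{y \<in> Y. orbit_cocycle \<gamma> y \<in> U} = Y - \<Union>(E ` (B - U))"
  proof (intro equalityI subsetI)
    fix y assume y: "y \<in> {y \<in> Y. orbit_cocycle \<gamma> y \<in> U}"
    have "orbit_cocycle \<gamma> y = h" if "h \<in> B" "y \<in> E h" for h
      using orbit_cocycle_eqI that y unfolding B_def E_def by blast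
    then show "y \<in> Y - \<Union>(E ` (B - U))" using y by blast
  next
    fix y assume y: "y \<in> Y - \<Union>(E ` (B - U))"
    then have "orbit_cocycle \<gamma> y \<in> B" "y \<in> E (orbit_cocycle \<gamma> y)"
      using orbit_cocycle[OF assms] unfolding B_def E_def by auto
    then show "y \<in> {y \<in> Y. orbit_cocycle \<gamma> y \<in> U}" using y by blast
  qed
  ultimately show ?thesis by (simp add: openin_diff)
qed

lemma orbit_cocycle_quasi_isometric:
  assumes "\<gamma> \<in> carrier G" "y \<in> Y"
  shows "real (word_length G S \<gamma>) / (K1 + K2 + 1) \<le> real (word_length H T (orbit_cocycle \<gamma> y))"
    and "real (word_length H T (orbit_cocycle \<gamma> y)) \<le> (K1 + K2 + 1) * real (word_length G S \<gamma>)"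
proof -
  have "real (word_length G S \<gamma>) \<le> real K2 * real (word_length H T (orbit_cocycle \<gamma> y))"
    using word_length_le_orbit_cocycle[OF assms] by (simp flip: of_nat_mult)
  also have "\<dots> \<le> (K1 + K2 + 1) * real (word_length H T (orbit_cocycle \<gamma> y))"
    by (intro mult_right_mono) simp_all
  finally have "real (word_length G S \<gamma>) \<le> (K1 + K2 + 1) * real (word_length H T (orbit_cocycle \<gamma> y))" .
  then show "real (word_length G S \<gamma>) / (K1 + K2 + 1) \<le> real (word_length H T (orbit_cocycle \<gamma> y))"
    by (simp add: divide_le_eq mult.commute)
  have "real (word_length H T (orbit_cocycle \<gamma> y)) \<le> real K1 * real (word_length G S \<gamma>)"
    using word_length_orbit_cocycle_le[OF assms] by (simp flip: of_nat_mult)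
  also have "\<dots> \<le> (K1 + K2 + 1) * real (word_length G S \<gamma>)"
    by (intro mult_right_mono) simp_all
  finally show "real (word_length H T (orbit_cocycle \<gamma> y)) \<le> (K1 + K2 + 1) * real (word_length G S \<gamma>)" .
qed

lemma exists_quasi_isometric_cocycle:
  "\<exists>delta :: 'g \<Rightarrow> 'y \<Rightarrow> 'h.
     (\<forall>\<gamma>\<in>carrier G. \<forall>y\<in>Y. delta \<gamma> y \<in> carrier H) \<and>
     continuous_map (prod_topology (discrete_topology (carrier G)) (top_of_set Y))
        (discrete_topology (carrier H)) (\<lambda>(\<gamma>, y). delta \<gamma> y) \<and>
     (\<forall>\<gamma>1\<in>carrier G. \<forall>\<gamma>2\<in>carrier G. \<forall>y\<in>Y.
        delta \<gamma>2 (phi \<gamma>1 y) \<otimes>\<^bsub>H\<^esub> delta \<gamma>1 y = delta (\<gamma>2 \<otimes>\<^bsub>G\<^esub> \<gamma>1) y) \<and>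
     (\<forall>y\<in>Y. bij_betw (\<lambda>\<gamma>. delta \<gamma> y) (carrier G) (carrier H)) \<and>
     (\<exists>C'\<ge>1. \<exists>A'\<ge>0. \<forall>\<gamma>\<in>carrier G. \<forall>y\<in>Y.
        real (word_length G S \<gamma>) / C' - A' \<le> real (word_length H T (delta \<gamma> y)) \<and>
        real (word_length H T (delta \<gamma> y)) \<le> C' * real (word_length G S \<gamma>) + A')"
proof (intro exI[of _ orbit_cocycle] conjI ballI)
  show "continuous_map (prod_topology (discrete_topology (carrier G)) (top_of_set Y))
      (discrete_topology (carrier H)) (\<lambda>(\<gamma>, y). orbit_cocycle \<gamma> y)"
    by (rule continuous_map_discrete_prod)
      (simp_all add: orbit_cocycle_closed openin_orbit_cocycle_preimage)
  show "\<exists>C'\<ge>1. \<exists>A'\<ge>0. \<forall>\<gamma>\<in>carrier G. \<forall>y\<in>Y.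
      real (word_length G S \<gamma>) / C' - A' \<le> real (word_length H T (orbit_cocycle \<gamma> y)) \<and>
      real (word_length H T (orbit_cocycle \<gamma> y)) \<le> C' * real (word_length G S \<gamma>) + A'"
  proof (rule exI[of _ "real (K1 + K2 + 1)"], intro conjI exI[of _ 0] ballI)
    fix \<gamma> y assume "\<gamma> \<in> carrier G" "y \<in> Y"
    from orbit_cocycle_quasi_isometric[OF this]
    show "real (word_length G S \<gamma>) / real (K1 + K2 + 1) - 0 \<le> real (word_length H T (orbit_cocycle \<gamma> y))"
      and "real (word_length H T (orbit_cocycle \<gamma> y)) \<le> real (K1 + K2 + 1) * real (word_length G S \<gamma>) + 0"
      by simp_all
  qed simp_all
qed (simp_all add: orbit_cocycle_closed orbit_cocycle_mult bij_betw_orbit_cocycle)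

end

lemma homeomorphism_qi_bounds:
  assumes homeo: "homeomorphism Y X f g" and "C \<ge> 1"
    and qi: "\<forall>i\<in>I. is_qi C A Y (dY i) X (dX i) f"
  shows "\<forall>i\<in>I. \<forall>a\<in>Y. \<forall>b\<in>Y. dX i (f a) (f b) \<le> C * dY i a b + A"
    and "\<forall>i\<in>I. \<forall>a\<in>X. \<forall>b\<in>X. dY i (g a) (g b) \<le> C * dX i a b + C * A"
proof -
  show "\<forall>i\<in>I. \<forall>a\<in>Y. \<forall>b\<in>Y. dX i (f a) (f b) \<le> C * dY i a b + A"
    using qi unfolding is_qi_def by blast
  show "\<forall>i\<in>I. \<forall>a\<in>X. \<forall>b\<in>X. dY i (g a) (g b) \<le> C * dX i a b + C * A"
  proof (intro ballI)
    fix i a b assume "i \<in> I" "a \<in> X" "b \<in> X"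
    then have "g a \<in> Y" "g b \<in> Y" "f (g a) = a" "f (g b) = b"
      using homeo unfolding homeomorphism_def by auto
    then have "dY i (g a) (g b) / C \<le> dX i a b + A" using qi \<open>i \<in> I\<close> unfolding is_qi_def by force
    then have "dY i (g a) (g b) \<le> (dX i a b + A) * C" using \<open>C \<ge> 1\<close> by (simp add: pos_divide_le_eq)
    then show "dY i (g a) (g b) \<le> C * dX i a b + C * A" by (simp add: algebra_simps)
  qed
qed

theorem corollary4p5:
  fixes G :: "('g, 'c) monoid_scheme" and S :: "'g set"
    and H :: "('h, 'e) monoid_scheme" and T :: "'h set"
    and Y :: "'y::metric_space set" and X :: "'x::metric_space set"
    and phi :: "'g \<Rightarrow> 'y \<Rightarrow> 'y" and psi :: "'h \<Rightarrow> 'x \<Rightarrow> 'x"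
    and f :: "'y \<Rightarrow> 'x" and I :: "'i set" and t tau :: "'i \<Rightarrow> real"
    and C A :: real
  assumes "fg_group G S" and "fg_group H T"
    and "compact Y" and "compact X"
    and "free_cont_action G Y phi" and "free_cont_action H X psi"
    and "\<exists>g. homeomorphism Y X f g"
    and "t ` I = {0<..}" and "tau ` I = {0<..}"
    and "C \<ge> 1" and "A \<ge> 0"
    and "\<forall>i\<in>I. is_qi C A Y (warped_dist S phi Y (t i)) X (warped_dist T psi X (tau i)) f"
  shows "\<exists>delta :: 'g \<Rightarrow> 'y \<Rightarrow> 'h.
     (\<forall>\<gamma>\<in>carrier G. \<forall>y\<in>Y. delta \<gamma> y \<in> carrier H) \<and>
     continuous_map (prod_topology (discrete_topology (carrier G)) (top_of_set Y))
        (discrete_topology (carrier H)) (\<lambda>(\<gamma>, y). delta \<gamma> y) \<and>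
     (\<forall>\<gamma>1\<in>carrier G. \<forall>\<gamma>2\<in>carrier G. \<forall>y\<in>Y.
        delta \<gamma>2 (phi \<gamma>1 y) \<otimes>\<^bsub>H\<^esub> delta \<gamma>1 y = delta (\<gamma>2 \<otimes>\<^bsub>G\<^esub> \<gamma>1) y) \<and>
     (\<forall>y\<in>Y. bij_betw (\<lambda>\<gamma>. delta \<gamma> y) (carrier G) (carrier H)) \<and>
     (\<exists>C'\<ge>1. \<exists>A'\<ge>0. \<forall>\<gamma>\<in>carrier G. \<forall>y\<in>Y.
        real (word_length G S \<gamma>) / C' - A' \<le> real (word_length H T (delta \<gamma> y)) \<and>
        real (word_length H T (delta \<gamma> y)) \<le> C' * real (word_length G S \<gamma>) + A')"
proof -
  obtain g where homeo: "homeomorphism Y X f g" using assms(7) by blast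
  then have maps: "\<forall>y\<in>Y. f y \<in> X" "\<forall>x\<in>X. g x \<in> Y" unfolding homeomorphism_def by auto
  have pos: "\<forall>i\<in>I. t i > 0" "\<forall>i\<in>I. tau i > 0" using assms(8,9) by (metis greaterThan_iff image_eqI)+
  have "C \<ge> 0" "C * A \<ge> 0" using assms(10,11) by simp_all
  note bounds = homeomorphism_qi_bounds[OF homeo assms(10,12)]
  obtain K1 where "\<forall>\<gamma>\<in>carrier G. \<forall>y\<in>Y.
      \<exists>h\<in>carrier H. word_length H T h \<le> K1 * word_length G S \<gamma> \<and> f (phi \<gamma> y) = psi h (f y)"
    using orbit_displacement_bound[OF assms(1,2,4,5,6) maps(1) assms(9) pos(1) bounds(1)]
      \<open>C \<ge> 0\<close> assms(11)
    by blast
  moreover obtain K2 where "\<forall>h\<in>carrier H. \<forall>x\<in>X.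
      \<exists>\<gamma>\<in>carrier G. word_length G S \<gamma> \<le> K2 * word_length H T h \<and> g (psi h x) = phi \<gamma> (g x)"
    using orbit_displacement_bound[OF assms(2,1,3,6,5) maps(2) assms(8) pos(2) bounds(2)]
      \<open>C \<ge> 0\<close> \<open>C * A \<ge> 0\<close>
    by blast
  ultimately interpret orbit_bounded_homeomorphism G S H T Y X phi psi f g K1 K2
    using assms(1,2,5,6) homeo by unfold_locales
  show ?thesis by (rule exists_quasi_isometric_cocycle)
qed

end
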